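(* Let $n=sk+r$ with integers $s\geq 2$, $k\geq 3$ and $1\leq r\leq k-1$. Then $t_2(n,k)\geq \chi(\overline{K}(n,k))$ in each of the following cases: (a) $k\geq 4$ and $s\geq 7$; (b) $k=3$ and $s\geq 17$; (c) $k\geq 7$ and $s=6$.
   Context: $\overline{K}(n,k)$ is the complement of the Kneser graph: its vertices are the $k$-element subsets of $[n]$, two distinct ones adjacent iff they intersect. $\chi$ is chromatic number. With $l=\lceil \frac{n-1}{2(k-1)}\rceil$, define $$t_2(n,k)=\sum_{i=1}^{\lceil n/2\rceil}\left\lfloor \frac{1}{l+1}\binom{n-i}{k-1}\right\rfloor.$$ *)

theory Defs
  imports Complex_Main
begin

definition kneser_vertices :: "nat \<Rightarrow> nat \<Rightarrow> nat set set" where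
  "kneser_vertices n k = {A. A \<subseteq> {1..n} \<and> card A = k}"

definition compl_kneser_adj :: "nat set \<Rightarrow> nat set \<Rightarrow> bool" where
  "compl_kneser_adj A B \<longleftrightarrow> A \<noteq> B \<and> A \<inter> B \<noteq> {}"

definition proper_colouring :: "nat \<Rightarrow> nat \<Rightarrow> nat \<Rightarrow> (nat set \<Rightarrow> nat) \<Rightarrow> bool" where
  "proper_colouring n k c f \<longleftrightarrow>
     (\<forall>A\<in>kneser_vertices n k. f A < c) \<and>
     (\<forall>A\<in>kneser_vertices n k. \<forall>B\<in>kneser_vertices n k.
        compl_kneser_adj A B \<longrightarrow> f A \<noteq> f B)"

definition chi_compl_kneser :: "nat \<Rightarrow> nat \<Rightarrow> nat" where
  "chi_compl_kneser n k = (LEAST c. \<exists>f. proper_colouring n k c f)"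

definition t2 :: "nat \<Rightarrow> nat \<Rightarrow> nat" where
  "t2 n k = (let l = nat \<lceil>(real n - 1) / (2 * (real k - 1))\<rceil>
             in \<Sum>i=1..nat \<lceil>real n / 2\<rceil>. ((n - i) choose (k - 1)) div (l + 1))"

end

(*
  Let N = C(n,k).  Following Baranyai, the k-subsets of {1..n} can be placed into N slots,
  grouped into blocks of s slots, such that the sets in each block are pairwise disjoint,
  provided s * k <= n: the elements 1, ..., n are added one at a time, the fractional
  assignment in which slot p receives the next element t + 1 with weight (k - |B p|) / (n - t)
  meets every counting constraint, and cancelling alternating cycles rounds it to an integral
  one.  Each block is an independent set of the complement of the Kneser graph, so chi <= c
  whenever N <= s * c.

  It remains to show N <= s * t2(n,k).  With M = ceil(n/2) the hockey-stick identity gives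
  N = sum_{i=1..M} C(n-i,k-1) + C(n-M,k), the floors in t2 lose less than M * l, and
  2^k * C(n-M,k) <= C(2(n-M),k) <= N.  The resulting polynomial inequality holds for large s;
  the finitely many remaining cases (k = 3, s = 17, 18 and k = 4, s = 7, 8) are computed.
*)

theory Submission
  imports Defs
begin

section \<open>Integral rounding of fractional transportation problems\<close>

definition class_sum :: "'p set \<Rightarrow> ('p \<Rightarrow> 'i) \<Rightarrow> ('p \<Rightarrow> real) \<Rightarrow> 'i \<Rightarrow> real" where
  "class_sum P \<kappa> x i = (\<Sum>p\<in>{p\<in>P. \<kappa> p = i}. x p)"

lemma sum_class_sums:
  assumes "finite Q"
  shows "(\<Sum>i\<in>\<kappa> ` Q. class_sum Q \<kappa> y i) = sum y Q"
  unfolding class_sum_def using assms by (rule sum.image_gen[symmetric])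

lemma class_sum_Inl_Inr:
  assumes "finite A" "finite B"
  shows "class_sum (Inl ` A \<union> Inr ` B) \<kappa> z i
       = class_sum A (\<kappa> \<circ> Inl) (z \<circ> Inl) i + class_sum B (\<kappa> \<circ> Inr) (z \<circ> Inr) i"
proof -
  have split: "{q\<in>Inl ` A \<union> Inr ` B. \<kappa> q = i}
      = Inl ` {p\<in>A. \<kappa> (Inl p) = i} \<union> Inr ` {p\<in>B. \<kappa> (Inr p) = i}"
    by auto
  show ?thesis
    unfolding class_sum_def split using assms by (subst sum.union_disjoint) (auto simp: sum.reindex)
qed

lemma card_eq_class_sum:
  assumes "finite Q" "\<forall>p\<in>Q. g p \<in> {0, 1}"
  shows "real (card {p\<in>Q. g p = 1 \<and> \<kappa> p = i}) = class_sum Q \<kappa> g i"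
proof -
  have "class_sum Q \<kappa> g i = (\<Sum>p\<in>{p\<in>Q. \<kappa> p = i}. if g p = 1 then 1 else 0)"
    unfolding class_sum_def using assms(2) by (intro sum.cong) auto
  also have "\<dots> = real (card {p\<in>{p\<in>Q. \<kappa> p = i}. g p = 1})"
    using assms(1) by (simp add: sum.inter_filter[symmetric])
  also have "{p\<in>{p\<in>Q. \<kappa> p = i}. g p = 1} = {p\<in>Q. g p = 1 \<and> \<kappa> p = i}" by auto
  finally show ?thesis by simp
qed

lemma first_repetition:
  fixes v :: "nat \<Rightarrow> 'a"
  assumes "finite (range v)"
  obtains a b where "a < b" "v a = v b" "inj_on v {..<b}"
proof -
  have "\<not> inj v" using assms finite_imageD by blast
  then have ex: "\<exists>b. \<exists>a<b. v a = v b" unfolding inj_def by (metis linorder_neqE_nat)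
  define b where "b = (LEAST b. \<exists>a<b. v a = v b)"
  obtain a where "a < b" "v a = v b" using LeastI_ex[OF ex] unfolding b_def by blast
  moreover have "inj_on v {..<b}"
  proof (rule inj_onI, rule ccontr)
    have "b \<le> y" if "x < y" "v x = v y" for x y
      unfolding b_def using that by (intro Least_le) blast
    moreover fix x y assume "x \<in> {..<b}" "y \<in> {..<b}" "v x = v y" "x \<noteq> y"
    ultimately show False by (metis lessThan_iff linorder_neqE_nat not_le)
  qed
  ultimately show ?thesis using that by blast
qed

lemma alternating_walk_exists:
  assumes "p0 \<in> F"
    and "\<forall>p\<in>F. \<exists>q\<in>F. q \<noteq> p \<and> r q = r p"
    and "\<forall>p\<in>F. \<exists>q\<in>F. q \<noteq> p \<and> c q = c p"
  obtains e where "\<And>j. e j \<in> F" "\<And>j. e (Suc j) \<noteq> e j"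
    "\<And>j. even j \<Longrightarrow> c (e (Suc j)) = c (e j)" "\<And>j. odd j \<Longrightarrow> r (e (Suc j)) = r (e j)"
proof -
  obtain nr where nr: "\<forall>p\<in>F. nr p \<in> F \<and> nr p \<noteq> p \<and> r (nr p) = r p"
    using bchoice[of F "\<lambda>p q. q \<in> F \<and> q \<noteq> p \<and> r q = r p"] assms(2) by blast
  obtain nc where nc: "\<forall>p\<in>F. nc p \<in> F \<and> nc p \<noteq> p \<and> c (nc p) = c p"
    using bchoice[of F "\<lambda>p q. q \<in> F \<and> q \<noteq> p \<and> c q = c p"] assms(3) by blast
  define e where "e = rec_nat p0 (\<lambda>j q. if even j then nc q else nr q)"
  have e_Suc: "e (Suc j) = (if even j then nc (e j) else nr (e j))" for j
    by (simp add: e_def)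
  have e_in: "e j \<in> F" for j
    by (induction j) (use assms(1) nr nc in \<open>auto simp: e_def\<close>)
  show ?thesis
  proof (rule that)
    fix j
    show "e j \<in> F" by (rule e_in)
    show "e (Suc j) \<noteq> e j" using e_in[of j] nr nc by (simp add: e_Suc)
    show "c (e (Suc j)) = c (e j)" if "even j" using e_in[of j] nc that by (simp add: e_Suc)
    show "r (e (Suc j)) = r (e j)" if "odd j" using e_in[of j] nr that by (simp add: e_Suc)
  qed
qed

lemma closed_alternating_walk_exists:
  assumes "finite F" "F \<noteq> {}"
    and "\<forall>p\<in>F. \<exists>q\<in>F. q \<noteq> p \<and> r q = r p"
    and "\<forall>p\<in>F. \<exists>q\<in>F. q \<noteq> p \<and> c q = c p"
  obtains e a b where "\<And>j. e j \<in> F"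
    "\<And>j. even j \<Longrightarrow> c (e (Suc j)) = c (e j)" "\<And>j. odd j \<Longrightarrow> r (e (Suc j)) = r (e j)"
    "a < b" "even a = even b" "if even a then r (e a) = r (e b) else c (e a) = c (e b)"
    "inj_on e {a..<b}"
proof -
  obtain p0 where "p0 \<in> F" using assms(2) by blast
  then obtain e where e_in: "\<And>j. e j \<in> F" and e_step: "\<And>j. e (Suc j) \<noteq> e j"
    and e_c: "\<And>j. even j \<Longrightarrow> c (e (Suc j)) = c (e j)"
    and e_r: "\<And>j. odd j \<Longrightarrow> r (e (Suc j)) = r (e j)"
    using alternating_walk_exists[of _ F r c] assms(3,4) by blast
  text \<open>\<open>v j\<close> is the line (row or column) along which the walk arrives at \<open>e j\<close>; between two
    visits of the same line the walk closes up into a cycle.\<close>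
  define v where "v j = (if even j then Inl (r (e j)) else Inr (c (e j)))" for j
  have "range v \<subseteq> Inl ` r ` F \<union> Inr ` c ` F" using e_in by (auto simp: v_def)
  then have "finite (range v)" using assms(1) finite_subset by blast
  then obtain a b where ab: "a < b" "v a = v b" and v_inj: "inj_on v {..<b}"
    by (rule first_repetition)
  have parity: "even a = even b" using ab(2) by (auto simp: v_def split: if_splits)
  have "False" if "j < j'" "j' < b" "e j = e j'" for j j'
  proof (cases "even j = even j'")
    case True
    then have "v j = v j'" using that(3) by (simp add: v_def)
    then show False using v_inj that by (auto dest: inj_onD)
  next
    case False
    then have "v (Suc j) = v j'" using that(3) e_c[of j] e_r[of j] by (auto simp: v_def)
    moreover have "Suc j \<noteq> j'" using e_step[of j] that(3) by auto
    ultimately show False using v_inj that by (auto dest: inj_onD)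
  qed
  then have "inj_on e {a..<b}" unfolding inj_on_def by (metis atLeastLessThan_iff linorder_neqE_nat)
  moreover have "if even a then r (e a) = r (e b) else c (e a) = c (e b)"
    using ab(2) parity by (auto simp: v_def)
  ultimately show ?thesis using that e_in e_c e_r ab(1) parity by blast
qed

lemma alternating_sum_telescopes:
  fixes R :: "nat \<Rightarrow> real"
  assumes "a \<le> b" "even a = even b" "R a = R b"
  shows "(\<Sum>j\<in>{a..<b}. (-1)^j * (R j + R (Suc j))) = 0"
proof -
  have "(\<Sum>j\<in>{a..<b}. (-1)^j * (R j + R (Suc j)))
      = - (\<Sum>j\<in>{a..<b}. (-1)^(Suc j) * R (Suc j) - (-1)^j * R j)"
    by (simp add: sum_negf[symmetric] algebra_simps)
  also have "\<dots> = - ((-1)^b * R b - (-1)^a * R a)"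
    using assms(1) by (subst sum_Suc_diff') auto
  also have "\<dots> = 0" using assms(2,3) by (simp add: minus_one_power_iff)
  finally show ?thesis .
qed

lemma signed_walk_indicator:
  fixes e :: "nat \<Rightarrow> 'p"
  assumes e_inj: "inj_on e {a..<b}" and "a < b" and e_in: "\<And>j. e j \<in> F" and "finite F"
    and \<delta>_def: "\<delta> = (\<lambda>q. \<Sum>j\<in>{a..<b}. if e j = q then (-1)^j else 0 :: real)"
  shows "\<delta> p \<in> {-1, 0, 1}" and "\<delta> p \<noteq> 0 \<Longrightarrow> p \<in> F" and "\<delta> (e a) \<noteq> 0"
    and "class_sum F \<kappa> \<delta> i = (\<Sum>j\<in>{a..<b}. (-1)^j * (if \<kappa> (e j) = i then 1 else 0))"
proof -
  have on_walk: "\<delta> (e j) = (-1)^j" if "j \<in> {a..<b}" for j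
  proof -
    have "\<delta> (e j) = (\<Sum>j'\<in>{a..<b}. if j' = j then (-1)^j' else 0)"
      unfolding \<delta>_def by (rule sum.cong) (use e_inj that in \<open>auto dest: inj_onD\<close>)
    then show ?thesis using that by simp
  qed
  have off_walk: "\<delta> q = 0" if "q \<notin> e ` {a..<b}" for q
    unfolding \<delta>_def by (rule sum.neutral) (use that in auto)
  show "\<delta> p \<in> {-1, 0, 1}"
  proof (cases "p \<in> e ` {a..<b}")
    case True
    then obtain j where "j \<in> {a..<b}" "p = e j" by blast
    then show ?thesis using on_walk by (cases "even j") auto
  qed (simp add: off_walk)
  show "p \<in> F" if "\<delta> p \<noteq> 0"
  proof -
    have "p \<in> e ` {a..<b}" using that off_walk by blast
    then show ?thesis using e_in by blast
  qed
  show "\<delta> (e a) \<noteq> 0" using on_walk[of a] \<open>a < b\<close> by simp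
  show "class_sum F \<kappa> \<delta> i = (\<Sum>j\<in>{a..<b}. (-1)^j * (if \<kappa> (e j) = i then 1 else 0))"
    unfolding class_sum_def \<delta>_def using \<open>finite F\<close> e_in
    by (subst sum.swap) (auto intro!: sum.cong)
qed

lemma alternating_cycle_exists:
  assumes "finite F" "F \<noteq> {}"
    and "\<forall>p\<in>F. \<exists>q\<in>F. q \<noteq> p \<and> r q = r p"
    and "\<forall>p\<in>F. \<exists>q\<in>F. q \<noteq> p \<and> c q = c p"
  obtains \<delta> :: "'p \<Rightarrow> real" where "\<And>p. \<delta> p \<in> {-1, 0, 1}" "\<And>p. \<delta> p \<noteq> 0 \<Longrightarrow> p \<in> F"
    "\<exists>p. \<delta> p \<noteq> 0" "class_sum F r \<delta> = (\<lambda>_. 0)" "class_sum F c \<delta> = (\<lambda>_. 0)"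
proof -
  obtain e a b where e_in: "\<And>j. e j \<in> F"
    and e_c: "\<And>j. even j \<Longrightarrow> c (e (Suc j)) = c (e j)"
    and e_r: "\<And>j. odd j \<Longrightarrow> r (e (Suc j)) = r (e j)"
    and ab: "a < b" "even a = even b" "if even a then r (e a) = r (e b) else c (e a) = c (e b)"
    and e_inj: "inj_on e {a..<b}"
    using closed_alternating_walk_exists[OF assms] by blast
  define \<delta> where "\<delta> = (\<lambda>q. \<Sum>j\<in>{a..<b}. if e j = q then (-1)^j else 0 :: real)"
  note \<delta> = signed_walk_indicator[OF e_inj ab(1) e_in assms(1) \<delta>_def]
  text \<open>Each row (column) is entered and left at consecutive steps of the walk, with opposite signs.\<close>
  have rows: "class_sum F r \<delta> i = 0" for i
  proof -
    define R where "R j = (if even j \<and> r (e j) = i then 1 else 0 :: real)" for j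
    have "(if r (e j) = i then 1 else 0) = R j + R (Suc j)" for j
      using e_r[of j] by (cases "even j") (auto simp: R_def)
    then have "class_sum F r \<delta> i = (\<Sum>j\<in>{a..<b}. (-1)^j * (R j + R (Suc j)))" by (simp add: \<delta>(4))
    also have "\<dots> = 0" by (rule alternating_sum_telescopes) (use ab in \<open>auto simp: R_def\<close>)
    finally show ?thesis .
  qed
  have columns: "class_sum F c \<delta> i = 0" for i
  proof -
    define C where "C j = (if odd j \<and> c (e j) = i then 1 else 0 :: real)" for j
    have "(if c (e j) = i then 1 else 0) = C j + C (Suc j)" for j
      using e_c[of j] by (cases "even j") (auto simp: C_def)
    then have "class_sum F c \<delta> i = (\<Sum>j\<in>{a..<b}. (-1)^j * (C j + C (Suc j)))" by (simp add: \<delta>(4))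
    also have "\<dots> = 0" by (rule alternating_sum_telescopes) (use ab in \<open>auto simp: C_def\<close>)
    finally show ?thesis .
  qed
  show ?thesis
  proof (rule that)
    show "\<delta> p \<in> {-1, 0, 1}" for p by (rule \<delta>(1))
    show "p \<in> F" if "\<delta> p \<noteq> 0" for p using that by (rule \<delta>(2))
    show "\<exists>p. \<delta> p \<noteq> 0" using \<delta>(3) by blast
    show "class_sum F r \<delta> = (\<lambda>_. 0)" "class_sum F c \<delta> = (\<lambda>_. 0)" using rows columns by auto
  qed
qed

lemma fractional_partner:
  assumes "finite P" "p \<in> P" "x p \<notin> {0, 1}" "\<forall>q\<in>P. x q \<in> {0..1}"
    and "class_sum P \<kappa> x (\<kappa> p) \<in> \<int>"
  shows "\<exists>q\<in>P. q \<noteq> p \<and> \<kappa> q = \<kappa> p \<and> x q \<notin> {0, 1}"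
proof (rule ccontr)
  assume no_partner: "\<not> ?thesis"
  let ?A = "{q\<in>P. \<kappa> q = \<kappa> p}"
  have "class_sum P \<kappa> x (\<kappa> p) = x p + (\<Sum>q\<in>?A - {p}. x q)"
    unfolding class_sum_def using assms(1,2) by (subst sum.remove[of _ p]) auto
  moreover have "(\<Sum>q\<in>?A - {p}. x q) \<in> \<int>"
    using no_partner by (intro Ints_sum) auto
  ultimately have "x p \<in> \<int>" using assms(5) by (metis Ints_diff add_diff_cancel_right')
  then obtain z where z: "x p = of_int z" by (auto elim: Ints_cases)
  moreover have "0 \<le> x p" "x p \<le> 1" using assms(2,4) by auto
  ultimately have "z = 0 \<or> z = 1" by auto
  then show False using assms(3) z by auto
qed

lemma shift_to_boundary:
  fixes x \<delta> :: "'p \<Rightarrow> real"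
  assumes "finite D" "D \<noteq> {}" "\<forall>p\<in>D. 0 < x p \<and> x p < 1" "\<forall>p\<in>D. \<delta> p \<in> {-1, 1}"
  obtains \<epsilon> where "0 < \<epsilon>" "\<forall>p\<in>D. x p + \<epsilon> * \<delta> p \<in> {0..1}" "\<exists>p\<in>D. x p + \<epsilon> * \<delta> p \<in> {0, 1}"
proof -
  text \<open>\<open>h p\<close> is how far \<open>x p\<close> may move in the direction \<open>\<delta> p\<close> before leaving \<open>[0, 1]\<close>.\<close>
  define h where "h p = (if \<delta> p = 1 then 1 - x p else x p)" for p
  define \<epsilon> where "\<epsilon> = Min (h ` D)"
  obtain p1 where p1: "p1 \<in> D" "h p1 = \<epsilon>"
    using Min_in[of "h ` D"] assms(1,2) unfolding \<epsilon>_def by fastforce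
  have \<epsilon>_le: "\<epsilon> \<le> h p" if "p \<in> D" for p using assms(1) that by (simp add: \<epsilon>_def)
  have \<epsilon>_pos: "0 < \<epsilon>" using p1 assms(3) by (auto simp: h_def)
  show ?thesis
  proof (rule that[OF \<epsilon>_pos])
    show "\<forall>p\<in>D. x p + \<epsilon> * \<delta> p \<in> {0..1}"
    proof
      fix p assume p: "p \<in> D"
      then have "0 < x p" "x p < 1" "\<delta> p = -1 \<or> \<delta> p = 1" using assms(3,4) by auto
      then show "x p + \<epsilon> * \<delta> p \<in> {0..1}" using \<epsilon>_le[OF p] \<epsilon>_pos by (auto simp: h_def)
    qed
    have "\<delta> p1 = -1 \<or> \<delta> p1 = 1" using assms(4) p1(1) by auto
    then have "x p1 + \<epsilon> * \<delta> p1 \<in> {0, 1}" using p1(2) by (auto simp: h_def)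
    then show "\<exists>p\<in>D. x p + \<epsilon> * \<delta> p \<in> {0, 1}" using p1(1) by blast
  qed
qed

lemma fractional_cycle_exists:
  fixes x :: "'p \<Rightarrow> real"
  assumes fin: "finite P" and bounds: "\<forall>p\<in>P. x p \<in> {0..1}"
    and rows: "\<forall>i. class_sum P r x i \<in> \<int>" and cols: "\<forall>j. class_sum P c x j \<in> \<int>"
    and frac: "{p\<in>P. x p \<notin> {0, 1}} \<noteq> {}"
  obtains \<delta> :: "'p \<Rightarrow> real" where "\<And>p. \<delta> p \<in> {-1, 0, 1}"
    "\<And>p. \<delta> p \<noteq> 0 \<Longrightarrow> p \<in> {p\<in>P. x p \<notin> {0, 1}}" "\<exists>p. \<delta> p \<noteq> 0"
    "class_sum P r \<delta> = (\<lambda>_. 0)" "class_sum P c \<delta> = (\<lambda>_. 0)"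
proof -
  define Fr where "Fr = {p\<in>P. x p \<notin> {0, 1}}"
  have fin_Fr: "finite Fr" using fin by (simp add: Fr_def)
  have partner: "\<exists>q\<in>Fr. q \<noteq> p \<and> \<kappa> q = \<kappa> p"
    if "p \<in> Fr" "class_sum P \<kappa> x (\<kappa> p) \<in> \<int>" for p and \<kappa> :: "'p \<Rightarrow> 'z"
    using fractional_partner[OF fin _ _ bounds that(2)] that(1) by (auto simp: Fr_def)
  have "\<forall>p\<in>Fr. \<exists>q\<in>Fr. q \<noteq> p \<and> r q = r p" "\<forall>p\<in>Fr. \<exists>q\<in>Fr. q \<noteq> p \<and> c q = c p"
    using partner rows cols by blast+
  then obtain \<delta> :: "'p \<Rightarrow> real" where \<delta>_vals: "\<And>p. \<delta> p \<in> {-1, 0, 1}"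
    and \<delta>_supp: "\<And>p. \<delta> p \<noteq> 0 \<Longrightarrow> p \<in> Fr" and \<delta>_ne: "\<exists>p. \<delta> p \<noteq> 0"
    and \<delta>_r: "class_sum Fr r \<delta> = (\<lambda>_. 0)" and \<delta>_c: "class_sum Fr c \<delta> = (\<lambda>_. 0)"
    using alternating_cycle_exists[OF fin_Fr] frac unfolding Fr_def by blast
  have P_sums: "class_sum P \<kappa> \<delta> = class_sum Fr \<kappa> \<delta>" for \<kappa> :: "'p \<Rightarrow> 'z"
    unfolding class_sum_def using fin \<delta>_supp by (intro ext sum.mono_neutral_right) (auto simp: Fr_def)
  show ?thesis
  proof (rule that)
    show "\<delta> p \<in> {-1, 0, 1}" for p by (rule \<delta>_vals)
    show "p \<in> {p\<in>P. x p \<notin> {0, 1}}" if "\<delta> p \<noteq> 0" for p using \<delta>_supp[OF that] by (simp add: Fr_def)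
    show "\<exists>p. \<delta> p \<noteq> 0" by (rule \<delta>_ne)
    show "class_sum P r \<delta> = (\<lambda>_. 0)" "class_sum P c \<delta> = (\<lambda>_. 0)"
      using \<delta>_r \<delta>_c by (simp_all add: P_sums)
  qed
qed

lemma cycle_cancelling_step:
  fixes x :: "'p \<Rightarrow> real"
  assumes fin: "finite P" and bounds: "\<forall>p\<in>P. x p \<in> {0..1}"
    and rows: "\<forall>i. class_sum P r x i \<in> \<int>" and cols: "\<forall>j. class_sum P c x j \<in> \<int>"
    and frac: "{p\<in>P. x p \<notin> {0, 1}} \<noteq> {}"
  obtains x' where "\<forall>p\<in>P. x' p \<in> {0..1}" "\<forall>p\<in>P. x p \<in> {0, 1} \<longrightarrow> x' p = x p"
    "class_sum P r x' = class_sum P r x" "class_sum P c x' = class_sum P c x"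
    "card {p\<in>P. x' p \<notin> {0, 1}} < card {p\<in>P. x p \<notin> {0, 1}}"
proof -
  define Fr where "Fr = {p\<in>P. x p \<notin> {0, 1}}"
  obtain \<delta> :: "'p \<Rightarrow> real" where \<delta>_vals: "\<And>p. \<delta> p \<in> {-1, 0, 1}"
    and \<delta>_supp: "\<And>p. \<delta> p \<noteq> 0 \<Longrightarrow> p \<in> Fr" and \<delta>_ne: "\<exists>p. \<delta> p \<noteq> 0"
    and \<delta>_r: "class_sum P r \<delta> = (\<lambda>_. 0)" and \<delta>_c: "class_sum P c \<delta> = (\<lambda>_. 0)"
    using fractional_cycle_exists[OF assms] unfolding Fr_def by blast
  define D where "D = {p. \<delta> p \<noteq> 0}"
  have D_Fr: "D \<subseteq> Fr" and fin_Fr: "finite Fr" using \<delta>_supp fin by (auto simp: D_def Fr_def)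
  have "finite D" "D \<noteq> {}" using fin_Fr D_Fr finite_subset \<delta>_ne by (auto simp: D_def)
  moreover have "\<forall>p\<in>D. 0 < x p \<and> x p < 1" using D_Fr bounds by (force simp: Fr_def)
  moreover have "\<forall>p\<in>D. \<delta> p \<in> {-1, 1}" using \<delta>_vals by (auto simp: D_def)
  ultimately obtain \<epsilon> where shift_in: "\<forall>p\<in>D. x p + \<epsilon> * \<delta> p \<in> {0..1}"
    and hit: "\<exists>p\<in>D. x p + \<epsilon> * \<delta> p \<in> {0, 1}"
    by (rule shift_to_boundary)
  define x' where "x' p = x p + \<epsilon> * \<delta> p" for p
  have x'_fixed: "x' p = x p" if "p \<notin> D" for p using that by (simp add: x'_def D_def)
  have same_sums: "class_sum P \<kappa> x' = class_sum P \<kappa> x" if "class_sum P \<kappa> \<delta> = (\<lambda>_. 0)"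
    for \<kappa> :: "'p \<Rightarrow> 'z"
    using that by (simp add: fun_eq_iff class_sum_def x'_def sum.distrib flip: sum_distrib_left)
  obtain p1 where p1: "p1 \<in> D" "x' p1 \<in> {0, 1}" using hit by (auto simp: x'_def)
  have "{p\<in>P. x' p \<notin> {0, 1}} \<subseteq> Fr - {p1}"
  proof
    fix p assume p: "p \<in> {p\<in>P. x' p \<notin> {0, 1}}"
    have "p \<in> Fr"
    proof (cases "p \<in> D")
      case False
      then show ?thesis using p x'_fixed by (auto simp: Fr_def)
    qed (use D_Fr in blast)
    moreover have "p \<noteq> p1" using p p1(2) by auto
    ultimately show "p \<in> Fr - {p1}" by blast
  qed
  then have "card {p\<in>P. x' p \<notin> {0, 1}} \<le> card (Fr - {p1})"
    using fin_Fr by (intro card_mono) auto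
  also have "\<dots> < card Fr" using p1(1) D_Fr fin_Fr by (intro card_Diff1_less) auto
  finally have fewer: "card {p\<in>P. x' p \<notin> {0, 1}} < card Fr" .
  show ?thesis
  proof (rule that)
    show "\<forall>p\<in>P. x' p \<in> {0..1}"
      using shift_in bounds x'_fixed by (metis x'_def)
    show "\<forall>p\<in>P. x p \<in> {0, 1} \<longrightarrow> x' p = x p"
    proof (intro ballI impI)
      fix p assume "p \<in> P" "x p \<in> {0, 1}"
      then have "p \<notin> D" using D_Fr by (auto simp: Fr_def)
      then show "x' p = x p" by (rule x'_fixed)
    qed
    show "class_sum P r x' = class_sum P r x" using same_sums \<delta>_r .
    show "class_sum P c x' = class_sum P c x" using same_sums \<delta>_c .
    show "card {p\<in>P. x' p \<notin> {0, 1}} < card {p\<in>P. x p \<notin> {0, 1}}"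
      using fewer by (simp only: Fr_def)
  qed
qed

lemma integral_rounding:
  fixes x :: "'p \<Rightarrow> real"
  assumes "finite P" "\<forall>p\<in>P. x p \<in> {0..1}"
    and "\<forall>i. class_sum P r x i \<in> \<int>" "\<forall>j. class_sum P c x j \<in> \<int>"
  shows "\<exists>g. (\<forall>p\<in>P. g p \<in> {0, 1}) \<and> (\<forall>p\<in>P. x p \<in> {0, 1} \<longrightarrow> g p = x p)
    \<and> class_sum P r g = class_sum P r x \<and> class_sum P c g = class_sum P c x"
  using assms(2-4)
proof (induction "card {p\<in>P. x p \<notin> {0, 1}}" arbitrary: x rule: less_induct)
  case less
  show ?case
  proof (cases "{p\<in>P. x p \<notin> {0, 1}} = {}")
    case True
    then show ?thesis by (intro exI[of _ x]) auto
  next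
    case False
    obtain x' where x': "\<forall>p\<in>P. x' p \<in> {0..1}" "\<forall>p\<in>P. x p \<in> {0, 1} \<longrightarrow> x' p = x p"
      "class_sum P r x' = class_sum P r x" "class_sum P c x' = class_sum P c x"
      "card {p\<in>P. x' p \<notin> {0, 1}} < card {p\<in>P. x p \<notin> {0, 1}}"
      using cycle_cancelling_step[OF assms(1) less.prems False] by blast
    then obtain g where "\<forall>p\<in>P. g p \<in> {0, 1}" "\<forall>p\<in>P. x' p \<in> {0, 1} \<longrightarrow> g p = x' p"
      "class_sum P r g = class_sum P r x'" "class_sum P c g = class_sum P c x'"
      using less.hyps[of x'] less.prems by auto
    with x' show ?thesis by (intro exI[of _ g]) auto
  qed
qed

lemma integral_rounding_slack_extension:
  fixes y :: "'p \<Rightarrow> real" and cl :: "'p \<Rightarrow> 'i" and col :: "'p \<Rightarrow> 'j"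
  assumes fin: "finite Q" and bounds: "\<forall>p\<in>Q. y p \<in> {0..1}"
    and cl_le: "\<forall>i. class_sum Q cl y i \<le> 1" and col_int: "\<forall>j. class_sum Q col y j \<in> \<int>"
  obtains g :: "'p + 'i \<Rightarrow> real"
  where "\<forall>p\<in>Q. g (Inl p) \<in> {0, 1}" "\<forall>i\<in>cl ` Q. g (Inr i) \<in> {0, 1}"
    "\<forall>p\<in>Q. y p = 0 \<longrightarrow> g (Inl p) = 0" "\<forall>i\<in>cl ` Q. class_sum Q cl y i = 1 \<longrightarrow> g (Inr i) = 0"
    "\<forall>i\<in>cl ` Q. class_sum Q cl (g \<circ> Inl) i + g (Inr i) = 1"
    "class_sum Q col (g \<circ> Inl) = class_sum Q col y"
proof -
  text \<open>Add a slack entry \<open>Inr i\<close> to every class \<open>i\<close>, filling its row up to \<open>1\<close>; all slack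
    entries form one extra column \<open>None\<close>.\<close>
  define P :: "('p + 'i) set" where "P = Inl ` Q \<union> Inr ` cl ` Q"
  define row where "row = case_sum cl (\<lambda>i. i)"
  define column :: "'p + 'i \<Rightarrow> 'j option" where "column = case_sum (Some \<circ> col) (\<lambda>_. None)"
  define x where "x = case_sum y (\<lambda>i. 1 - class_sum Q cl y i)"
  have fin_cl: "finite (cl ` Q)" and fin_P: "finite P" using fin by (simp_all add: P_def)
  have row_sum: "class_sum P row z i = class_sum Q cl (z \<circ> Inl) i + (if i \<in> cl ` Q then z (Inr i) else 0)"
    for z i
  proof -
    have "{i'\<in>cl ` Q. i' = i} = (if i \<in> cl ` Q then {i} else {})" by auto
    then show ?thesis unfolding P_def class_sum_Inl_Inr[OF fin fin_cl]
      by (simp add: class_sum_def row_def o_def)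
  qed
  have column_sum: "class_sum P column z (Some j) = class_sum Q col (z \<circ> Inl) j"
    "class_sum P column z None = (\<Sum>i\<in>cl ` Q. z (Inr i))" for z j
    unfolding P_def class_sum_Inl_Inr[OF fin fin_cl] by (simp_all add: class_sum_def column_def o_def)
  have empty_class: "class_sum Q cl y i = 0" if "i \<notin> cl ` Q" for i
    unfolding class_sum_def using that by (intro sum.neutral) auto
  have x_bounds: "\<forall>q\<in>P. x q \<in> {0..1}"
    using bounds cl_le by (auto simp: P_def x_def class_sum_def intro!: sum_nonneg)
  have x_rows: "class_sum P row x i = (if i \<in> cl ` Q then 1 else 0)" for i
    using empty_class[of i] by (simp add: row_sum x_def o_def)
  have x_rows_int: "\<forall>i. class_sum P row x i \<in> \<int>" by (simp add: x_rows)
  have "sum y Q \<in> \<int>"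
    unfolding sum_class_sums[OF fin, of col, symmetric] using col_int by (simp add: Ints_sum)
  then have "class_sum P column x None \<in> \<int>"
    by (simp add: column_sum x_def sum_subtractf sum_class_sums[OF fin])
  then have x_columns: "\<forall>j. class_sum P column x j \<in> \<int>"
    using col_int by (intro allI, case_tac j) (simp_all add: column_sum x_def o_def)
  obtain g where g01: "\<forall>q\<in>P. g q \<in> {0, 1}" and g_fix: "\<forall>q\<in>P. x q \<in> {0, 1} \<longrightarrow> g q = x q"
    and g_rows: "class_sum P row g = class_sum P row x"
    and g_columns: "class_sum P column g = class_sum P column x"
    using integral_rounding[OF fin_P x_bounds x_rows_int x_columns] by blast
  show ?thesis
  proof (rule that)
    show "\<forall>p\<in>Q. g (Inl p) \<in> {0, 1}" "\<forall>i\<in>cl ` Q. g (Inr i) \<in> {0, 1}" using g01 by (auto simp: P_def)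
    show "\<forall>p\<in>Q. y p = 0 \<longrightarrow> g (Inl p) = 0" "\<forall>i\<in>cl ` Q. class_sum Q cl y i = 1 \<longrightarrow> g (Inr i) = 0"
      using g_fix by (auto simp: P_def x_def)
    show "\<forall>i\<in>cl ` Q. class_sum Q cl (g \<circ> Inl) i + g (Inr i) = 1"
    proof
      fix i assume "i \<in> cl ` Q"
      then show "class_sum Q cl (g \<circ> Inl) i + g (Inr i) = 1"
        using row_sum[of g i] g_rows x_rows[of i] by simp
    qed
    show "class_sum Q col (g \<circ> Inl) = class_sum Q col y"
      using column_sum(1)[of g] column_sum(1)[of x] g_columns by (auto simp: x_def o_def fun_eq_iff)
  qed
qed

lemma integral_rounding_with_slack:
  fixes y :: "'p \<Rightarrow> real" and cl :: "'p \<Rightarrow> 'i" and col :: "'p \<Rightarrow> 'j"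
  assumes fin: "finite Q" and bounds: "\<forall>p\<in>Q. y p \<in> {0..1}"
    and cl_le: "\<forall>i. class_sum Q cl y i \<le> 1" and col_int: "\<forall>j. class_sum Q col y j \<in> \<int>"
  obtains C where "C \<subseteq> Q" "\<forall>p\<in>C. y p \<noteq> 0" "\<forall>i. card {p\<in>C. cl p = i} \<le> 1"
    "\<forall>i. class_sum Q cl y i = 1 \<longrightarrow> (\<exists>p\<in>C. cl p = i)"
    "\<forall>j. real (card {p\<in>C. col p = j}) = class_sum Q col y j"
proof -
  obtain g :: "'p + 'i \<Rightarrow> real" where g01: "\<forall>p\<in>Q. g (Inl p) \<in> {0, 1}" "\<forall>i\<in>cl ` Q. g (Inr i) \<in> {0, 1}"
    and g_zero: "\<forall>p\<in>Q. y p = 0 \<longrightarrow> g (Inl p) = 0"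
    and g_full: "\<forall>i\<in>cl ` Q. class_sum Q cl y i = 1 \<longrightarrow> g (Inr i) = 0"
    and g_rows: "\<forall>i\<in>cl ` Q. class_sum Q cl (g \<circ> Inl) i + g (Inr i) = 1"
    and g_columns: "class_sum Q col (g \<circ> Inl) = class_sum Q col y"
    using integral_rounding_slack_extension[OF assms] by blast
  define C where "C = {p\<in>Q. g (Inl p) = 1}"
  have card_C: "real (card {p\<in>C. \<kappa> p = i}) = class_sum Q \<kappa> (g \<circ> Inl) i" for \<kappa> :: "'p \<Rightarrow> 'z" and i
    using card_eq_class_sum[of Q "g \<circ> Inl" \<kappa> i] fin g01(1) by (simp add: C_def)
  have empty_class: "{p\<in>C. cl p = i} = {}" if "i \<notin> cl ` Q" for i
    using that by (auto simp: C_def)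
  show ?thesis
  proof (rule that)
    show "C \<subseteq> Q" "\<forall>p\<in>C. y p \<noteq> 0" using g_zero by (auto simp: C_def)
    have row: "real (card {p\<in>C. cl p = i}) + g (Inr i) = 1" if "i \<in> cl ` Q" for i
    proof -
      have "class_sum Q cl (g \<circ> Inl) i + g (Inr i) = 1" using g_rows that by blast
      then show ?thesis by (simp add: card_C)
    qed
    show "\<forall>i. card {p\<in>C. cl p = i} \<le> 1"
    proof
      fix i show "card {p\<in>C. cl p = i} \<le> 1"
      proof (cases "i \<in> cl ` Q")
        case True
        then have "0 \<le> g (Inr i)" using g01(2) by auto
        then show ?thesis using row[OF True] by linarith
      qed (simp add: empty_class)
    qed
    show "\<forall>i. class_sum Q cl y i = 1 \<longrightarrow> (\<exists>p\<in>C. cl p = i)"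
    proof (intro allI impI)
      fix i assume full: "class_sum Q cl y i = 1"
      have i: "i \<in> cl ` Q"
      proof (rule ccontr)
        assume "i \<notin> cl ` Q"
        then have "{p\<in>Q. cl p = i} = {}" by auto
        then show False using full unfolding class_sum_def by (simp only: sum.empty)
      qed
      then have "card {p\<in>C. cl p = i} = 1" using row[OF i] g_full full by simp
      then obtain p where "{p\<in>C. cl p = i} = {p}" by (rule card_1_singletonE)
      then have "p \<in> {p\<in>C. cl p = i}" by simp
      then show "\<exists>p\<in>C. cl p = i" by blast
    qed
    show "\<forall>j. real (card {p\<in>C. col p = j}) = class_sum Q col y j"
    proof
      fix j show "real (card {p\<in>C. col p = j}) = class_sum Q col y j"
        using card_C[of col j] g_columns by simp
    qed
  qed
qed

section \<open>Splitting the \<open>k\<close>-subsets into blocks of pairwise disjoint sets\<close>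

text \<open>The number of \<open>k\<close>-subsets of \<open>{1..n}\<close> whose trace on \<open>{1..t}\<close> is \<open>S\<close>.\<close>

definition expected_slots :: "nat \<Rightarrow> nat \<Rightarrow> nat \<Rightarrow> nat set \<Rightarrow> nat" where
  "expected_slots n k t S = (if card S \<le> k then (n - t) choose (k - card S) else 0)"

lemma expected_slots_pascal:
  assumes "t < n" "finite S" "Suc t \<notin> S"
  shows "expected_slots n k t S = expected_slots n k (Suc t) (insert (Suc t) S) + expected_slots n k (Suc t) S"
proof -
  obtain m where m: "n - t = Suc m" "n - Suc t = m" using assms(1) by (metis Suc_diff_Suc)
  have "card (insert (Suc t) S) = Suc (card S)" using assms(2,3) by simp
  moreover have "Suc m choose (k - card S) = (m choose (k - Suc (card S))) + (m choose (k - card S))"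
    if "card S < k"
    using that by (metis Suc_diff_Suc binomial_Suc_Suc)
  ultimately show ?thesis using m by (auto simp: expected_slots_def not_less_eq_eq le_Suc_eq)
qed

lemma expected_slots_absorption:
  assumes "t < n" "finite S" "Suc t \<notin> S"
  shows "expected_slots n k t S * (k - card S) = (n - t) * expected_slots n k (Suc t) (insert (Suc t) S)"
proof (cases "card S < k")
  case True
  obtain j where j: "k - card S = Suc j" "k - Suc (card S) = j" using True by (metis Suc_diff_Suc)
  have "card (insert (Suc t) S) = Suc (card S)" using assms(2,3) by simp
  then show ?thesis using True j binomial_absorption[of j "n - t"] assms(1)
    by (simp add: expected_slots_def mult.commute)
next
  case False
  have "card (insert (Suc t) S) = Suc (card S)" using assms(2,3) by simp
  then show ?thesis using False by (simp add: expected_slots_def)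
qed

definition block_deficit :: "nat \<Rightarrow> nat \<Rightarrow> nat \<Rightarrow> (nat \<Rightarrow> nat set) \<Rightarrow> nat \<Rightarrow> nat" where
  "block_deficit k s N B i = (\<Sum>p | p < N \<and> p div s = i. k - card (B p))"

text \<open>Baranyai's invariant after the elements \<open>1, ..., t\<close> have been placed: there are \<open>N\<close>
  slots, grouped into blocks of \<open>s\<close> consecutive slots (block \<open>p div s\<close>), and \<open>B p\<close> is the part
  of the \<open>k\<close>-set under construction in slot \<open>p\<close>.  A choice \<open>C\<close> is a set of slots that may
  receive the element \<open>t + 1\<close> next.\<close>

definition baranyai_inv :: "nat \<Rightarrow> nat \<Rightarrow> nat \<Rightarrow> nat \<Rightarrow> nat \<Rightarrow> (nat \<Rightarrow> nat set) \<Rightarrow> bool" where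
  "baranyai_inv n k s N t B \<longleftrightarrow>
     (\<forall>p<N. B p \<subseteq> {1..t}) \<and>
     (\<forall>p<N. \<forall>q<N. p \<noteq> q \<longrightarrow> p div s = q div s \<longrightarrow> B p \<inter> B q = {}) \<and>
     (\<forall>S\<subseteq>{1..t}. card {p. p < N \<and> B p = S} = expected_slots n k t S) \<and>
     (\<forall>i. block_deficit k s N B i \<le> n - t)"

definition baranyai_choice ::
    "nat \<Rightarrow> nat \<Rightarrow> nat \<Rightarrow> nat \<Rightarrow> nat \<Rightarrow> (nat \<Rightarrow> nat set) \<Rightarrow> nat set \<Rightarrow> bool" where
  "baranyai_choice n k s N t B C \<longleftrightarrow>
     C \<subseteq> {..<N} \<and> (\<forall>p\<in>C. card (B p) < k) \<and> (\<forall>i. card {p\<in>C. p div s = i} \<le> 1) \<and>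
     (\<forall>i. block_deficit k s N B i = n - t \<longrightarrow> (\<exists>p\<in>C. p div s = i)) \<and>
     (\<forall>S\<subseteq>{1..t}. card {p\<in>C. B p = S} = expected_slots n k (Suc t) (insert (Suc t) S))"

lemma baranyai_fractional_choice:
  assumes inv: "baranyai_inv n k s N t B" and "t < n"
    and y_def: "y = (\<lambda>p. real (k - card (B p)) / real (n - t))"
  shows "\<forall>p\<in>{..<N}. y p \<in> {0..1}"
    and "class_sum {..<N} (\<lambda>p. p div s) y i = real (block_deficit k s N B i) / real (n - t)"
    and "class_sum {..<N} (\<lambda>p. p div s) y i \<le> 1"
    and "S \<subseteq> {1..t} \<Longrightarrow> class_sum {..<N} B y S = real (expected_slots n k (Suc t) (insert (Suc t) S))"
    and "\<not> S \<subseteq> {1..t} \<Longrightarrow> class_sum {..<N} B y S = 0"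
proof -
  have B_sub: "\<forall>p<N. B p \<subseteq> {1..t}"
    and counts: "\<forall>S\<subseteq>{1..t}. card {p. p < N \<and> B p = S} = expected_slots n k t S"
    and deficit: "\<forall>i. block_deficit k s N B i \<le> n - t"
    using inv by (auto simp: baranyai_inv_def)
  have pos: "0 < real (n - t)" using \<open>t < n\<close> by simp
  show class_y: "class_sum {..<N} (\<lambda>p. p div s) y i = real (block_deficit k s N B i) / real (n - t)" for i
    unfolding class_sum_def block_deficit_def y_def by (simp add: sum_divide_distrib)
  show "\<forall>p\<in>{..<N}. y p \<in> {0..1}"
  proof
    fix p assume "p \<in> {..<N}"
    then have "k - card (B p) \<le> block_deficit k s N B (p div s)"
      unfolding block_deficit_def by (intro member_le_sum) auto
    then have "real (k - card (B p)) \<le> real (n - t)" using deficit by (metis le_trans of_nat_le_iff)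
    then show "y p \<in> {0..1}" using pos by (simp add: y_def)
  qed
  have "real (block_deficit k s N B i) \<le> real (n - t)" using deficit by (simp only: of_nat_le_iff)
  then show "class_sum {..<N} (\<lambda>p. p div s) y i \<le> 1" using pos by (simp add: class_y)
  show "class_sum {..<N} B y S = real (expected_slots n k (Suc t) (insert (Suc t) S))"
    if "S \<subseteq> {1..t}"
  proof -
    have S: "finite S" "Suc t \<notin> S" using that finite_subset by auto
    have "class_sum {..<N} B y S = real (card {p. p < N \<and> B p = S}) * real (k - card S) / real (n - t)"
      unfolding class_sum_def y_def by simp
    also have "\<dots> = real (expected_slots n k t S * (k - card S)) / real (n - t)"
      using counts that by simp
    also have "\<dots> = real (expected_slots n k (Suc t) (insert (Suc t) S))"
      using expected_slots_absorption[OF \<open>t < n\<close> S] pos by simp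
    finally show ?thesis .
  qed
  show "class_sum {..<N} B y S = 0" if "\<not> S \<subseteq> {1..t}"
    unfolding class_sum_def using B_sub that by (intro sum.neutral) auto
qed

lemma baranyai_choice_exists:
  assumes inv: "baranyai_inv n k s N t B" and "t < n"
  obtains C where "baranyai_choice n k s N t B C"
proof -
  define y where "y = (\<lambda>p. real (k - card (B p)) / real (n - t))"
  note y = baranyai_fractional_choice[OF inv \<open>t < n\<close> y_def]
  have cl_le: "\<forall>i. class_sum {..<N} (\<lambda>p. p div s) y i \<le> 1" using y(3) by blast
  have col_int: "\<forall>S. class_sum {..<N} B y S \<in> \<int>"
  proof
    fix S show "class_sum {..<N} B y S \<in> \<int>" using y(4)[of S] y(5)[of S] by (cases "S \<subseteq> {1..t}") simp_all
  qed
  obtain C where C: "C \<subseteq> {..<N}" "\<forall>p\<in>C. y p \<noteq> 0" "\<forall>i. card {p\<in>C. p div s = i} \<le> 1"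
    "\<forall>i. class_sum {..<N} (\<lambda>p. p div s) y i = 1 \<longrightarrow> (\<exists>p\<in>C. p div s = i)"
    "\<forall>S. real (card {p\<in>C. B p = S}) = class_sum {..<N} B y S"
    using integral_rounding_with_slack[OF finite_lessThan y(1) cl_le col_int] by blast
  have "baranyai_choice n k s N t B C"
    unfolding baranyai_choice_def
  proof (intro conjI allI impI ballI)
    show "C \<subseteq> {..<N}" by (rule C(1))
    show "card (B p) < k" if "p \<in> C" for p using C(2) that by (auto simp: y_def)
    show "card {p\<in>C. p div s = i} \<le> 1" for i using C(3) by blast
    show "\<exists>p\<in>C. p div s = i" if "block_deficit k s N B i = n - t" for i
      using C(4) that \<open>t < n\<close> by (simp add: y(2))
    show "card {p\<in>C. B p = S} = expected_slots n k (Suc t) (insert (Suc t) S)"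
      if "S \<subseteq> {1..t}" for S
      using C(5) y(4)[OF that] by (metis of_nat_eq_iff)
  qed
  then show ?thesis by (rule that)
qed

lemma baranyai_step_counts:
  assumes inv: "baranyai_inv n k s N t B" and "t < n" and choice: "baranyai_choice n k s N t B C"
    and S: "S \<subseteq> {1..Suc t}"
  shows "card {p. p < N \<and> (if p \<in> C then insert (Suc t) (B p) else B p) = S}
    = expected_slots n k (Suc t) S"
proof -
  have B_sub: "\<forall>p<N. B p \<subseteq> {1..t}"
    and counts: "\<forall>S\<subseteq>{1..t}. card {p. p < N \<and> B p = S} = expected_slots n k t S"
    using inv by (auto simp: baranyai_inv_def)
  have C_sub: "C \<subseteq> {..<N}"
    and C_counts: "\<forall>S\<subseteq>{1..t}. card {p\<in>C. B p = S} = expected_slots n k (Suc t) (insert (Suc t) S)"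
    using choice by (auto simp: baranyai_choice_def)
  have new: "Suc t \<notin> B p" if "p < N" for p using B_sub that by fastforce
  let ?B' = "\<lambda>p. if p \<in> C then insert (Suc t) (B p) else B p"
  show ?thesis
  proof (cases "Suc t \<in> S")
    case True
    define S0 where "S0 = S - {Suc t}"
    have S0: "S0 \<subseteq> {1..t}" "S = insert (Suc t) S0" using S True by (auto simp: S0_def)
    have "{p. p < N \<and> ?B' p = S} = {p\<in>C. B p = S0}"
    proof (intro set_eqI iffI)
      fix p assume p: "p \<in> {p. p < N \<and> ?B' p = S}"
      then have "p \<in> C" using new True by (metis (mono_tags, lifting) mem_Collect_eq)
      then have "insert (Suc t) (B p) = S" using p by simp
      then show "p \<in> {p\<in>C. B p = S0}" using \<open>p \<in> C\<close> new p by (auto simp: S0_def)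
    next
      fix p assume "p \<in> {p\<in>C. B p = S0}"
      then show "p \<in> {p. p < N \<and> ?B' p = S}" using C_sub S0(2) by auto
    qed
    then show ?thesis using C_counts S0 by simp
  next
    case False
    then have S': "S \<subseteq> {1..t}" using S by (auto simp: le_Suc_eq)
    have fin: "finite S" "Suc t \<notin> S" using S' finite_subset False by auto
    have "{p. p < N \<and> ?B' p = S} = {p. p < N \<and> B p = S} - {p\<in>C. B p = S}"
    proof (intro set_eqI iffI)
      fix p assume p: "p \<in> {p. p < N \<and> ?B' p = S}"
      then have "p \<notin> C" using False by (metis (mono_tags, lifting) insertI1 mem_Collect_eq)
      then show "p \<in> {p. p < N \<and> B p = S} - {p\<in>C. B p = S}" using p by simp
    qed (use C_sub in auto)
    moreover have "{p\<in>C. B p = S} \<subseteq> {p. p < N \<and> B p = S}" "finite {p\<in>C. B p = S}"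
      using C_sub finite_subset by fastforce+
    ultimately have "card {p. p < N \<and> ?B' p = S}
        = card {p. p < N \<and> B p = S} - card {p\<in>C. B p = S}"
      by (simp add: card_Diff_subset)
    also have "\<dots> = expected_slots n k t S - expected_slots n k (Suc t) (insert (Suc t) S)"
      using counts C_counts S' by simp
    also have "\<dots> = expected_slots n k (Suc t) S"
      using expected_slots_pascal[OF \<open>t < n\<close> fin] by simp
    finally show ?thesis .
  qed
qed

lemma baranyai_step_deficit:
  assumes inv: "baranyai_inv n k s N t B" and "t < n" and choice: "baranyai_choice n k s N t B C"
  shows "block_deficit k s N (\<lambda>p. if p \<in> C then insert (Suc t) (B p) else B p) i \<le> n - Suc t"
proof -
  let ?B' = "\<lambda>p. if p \<in> C then insert (Suc t) (B p) else B p"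
  let ?chosen = "card {p\<in>C. p div s = i}"
  have B_sub: "\<forall>p<N. B p \<subseteq> {1..t}" and deficit: "block_deficit k s N B i \<le> n - t"
    using inv by (auto simp: baranyai_inv_def)
  have C_sub: "C \<subseteq> {..<N}" and C_small: "\<forall>p\<in>C. card (B p) < k"
    and C_one: "?chosen \<le> 1"
    and C_full: "block_deficit k s N B i = n - t \<Longrightarrow> \<exists>p\<in>C. p div s = i"
    using choice by (auto simp: baranyai_choice_def)
  have grow: "k - card (?B' p) + (if p \<in> C then 1 else 0) = k - card (B p)" if "p < N" for p
  proof (cases "p \<in> C")
    case True
    have "finite (B p)" "Suc t \<notin> B p" using B_sub that finite_subset by fastforce+
    moreover have "card (B p) < k" using True C_small by blast
    ultimately show ?thesis using True by simp
  qed simp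
  have "block_deficit k s N ?B' i + ?chosen = block_deficit k s N B i"
  proof -
    have "{p\<in>{p. p < N \<and> p div s = i}. p \<in> C} = {p\<in>C. p div s = i}" using C_sub by auto
    then have "?chosen = (\<Sum>p | p < N \<and> p div s = i. if p \<in> C then 1 else 0)"
      by (simp add: sum.inter_filter[symmetric])
    then show ?thesis unfolding block_deficit_def using grow by (simp add: sum.distrib[symmetric])
  qed
  moreover have "?chosen \<ge> 1" if "block_deficit k s N B i = n - t"
  proof -
    have "finite {p\<in>C. p div s = i}" using C_sub finite_subset by fastforce
    then show ?thesis using C_full[OF that] by (auto simp: Suc_le_eq card_gt_0_iff)
  qed
  ultimately show ?thesis using deficit C_one by linarith
qed

lemma baranyai_inv_step:
  assumes inv: "baranyai_inv n k s N t B" and "t < n" and choice: "baranyai_choice n k s N t B C"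
  shows "baranyai_inv n k s N (Suc t) (\<lambda>p. if p \<in> C then insert (Suc t) (B p) else B p)"
proof -
  let ?B' = "\<lambda>p. if p \<in> C then insert (Suc t) (B p) else B p"
  have B_sub: "\<forall>p<N. B p \<subseteq> {1..t}"
    and disjoint: "\<forall>p<N. \<forall>q<N. p \<noteq> q \<longrightarrow> p div s = q div s \<longrightarrow> B p \<inter> B q = {}"
    using inv by (auto simp: baranyai_inv_def)
  have C_one: "\<forall>i. card {p\<in>C. p div s = i} \<le> 1" and fin_C: "finite C"
    using choice finite_subset by (auto simp: baranyai_choice_def)
  have one_per_block: "\<not> (p \<in> C \<and> q \<in> C)" if "p \<noteq> q" "p div s = q div s" for p q
  proof
    assume "p \<in> C \<and> q \<in> C"
    then have "card {p, q} \<le> card {r\<in>C. r div s = p div s}"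
      using that fin_C by (intro card_mono) auto
    also have "\<dots> \<le> 1" using C_one by blast
    finally show False using that(1) by simp
  qed
  have new: "Suc t \<notin> B p" if "p < N" for p using B_sub that by fastforce
  show ?thesis
    unfolding baranyai_inv_def
  proof (intro conjI allI impI)
    show "?B' p \<subseteq> {1..Suc t}" if "p < N" for p
    proof -
      have "B p \<subseteq> {1..t}" using B_sub that by blast
      then show ?thesis by auto
    qed
    show "?B' p \<inter> ?B' q = {}" if "p < N" "q < N" "p \<noteq> q" "p div s = q div s" for p q
    proof -
      have "B p \<inter> B q = {}" using disjoint that by blast
      then show ?thesis using one_per_block[OF that(3,4)] new[OF that(1)] new[OF that(2)] by auto
    qed
    show "card {p. p < N \<and> ?B' p = S} = expected_slots n k (Suc t) S" if "S \<subseteq> {1..Suc t}" for S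
      by (rule baranyai_step_counts[OF assms that])
    show "block_deficit k s N ?B' i \<le> n - Suc t" for i
      by (rule baranyai_step_deficit[OF assms])
  qed
qed

lemma card_div_eq_le_divisor:
  assumes "0 < s"
  shows "card {p. p < N \<and> p div s = i} \<le> s"
proof -
  let ?block = "{p. p < N \<and> p div s = i}"
  have "inj_on (\<lambda>p. p mod s) ?block"
  proof (rule inj_onI)
    fix p q assume "p \<in> ?block" "q \<in> ?block" "p mod s = q mod s"
    then have "p div s * s + p mod s = q div s * s + q mod s" by simp
    then show "p = q" by simp
  qed
  moreover have "(\<lambda>p. p mod s) ` ?block \<subseteq> {..<s}" using assms by auto
  ultimately have "card ?block \<le> card {..<s}" by (intro card_inj_on_le) auto
  then show ?thesis by simp
qed

lemma baranyai_inv_init: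
  assumes "0 < s" "s * k \<le> n"
  shows "baranyai_inv n k s (n choose k) 0 (\<lambda>_. {})"
proof -
  have "block_deficit k s (n choose k) (\<lambda>_. {}) i \<le> n" for i
  proof -
    have "block_deficit k s (n choose k) (\<lambda>_. {}) i = k * card {p. p < n choose k \<and> p div s = i}"
      by (simp add: block_deficit_def)
    also have "\<dots> \<le> k * s" using card_div_eq_le_divisor[OF assms(1)] by simp
    finally show ?thesis using assms(2) by (simp add: mult.commute)
  qed
  moreover have "S = {}" if "S \<subseteq> {1..0::nat}" for S using that by auto
  ultimately show ?thesis by (auto simp: baranyai_inv_def expected_slots_def)
qed

lemma baranyai_inv_exists:
  assumes "0 < s" "s * k \<le> n" "t \<le> n"
  shows "\<exists>B. baranyai_inv n k s (n choose k) t B"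
  using assms(3)
proof (induction t)
  case 0
  show ?case using baranyai_inv_init[OF assms(1,2)] by blast
next
  case (Suc t)
  then obtain B where inv: "baranyai_inv n k s (n choose k) t B" by auto
  have "t < n" using Suc.prems by simp
  then obtain C where "baranyai_choice n k s (n choose k) t B C"
    by (rule baranyai_choice_exists[OF inv])
  then show ?case using baranyai_inv_step[OF inv \<open>t < n\<close>] by blast
qed

lemma chi_compl_kneser_le:
  assumes "0 < s" "s * k \<le> n" "n choose k \<le> s * c"
  shows "chi_compl_kneser n k \<le> c"
proof -
  let ?N = "n choose k"
  obtain B where inv: "baranyai_inv n k s ?N n B"
    using baranyai_inv_exists[OF assms(1,2) order_refl] by blast
  have disjoint: "\<forall>p<?N. \<forall>q<?N. p \<noteq> q \<longrightarrow> p div s = q div s \<longrightarrow> B p \<inter> B q = {}"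
    and counts: "\<forall>S\<subseteq>{1..n}. card {p. p < ?N \<and> B p = S} = expected_slots n k n S"
    using inv by (auto simp: baranyai_inv_def)
  have unique_slot: "\<exists>!p. p < ?N \<and> B p = A" if "A \<in> kneser_vertices n k" for A
  proof -
    have A: "A \<subseteq> {1..n}" "card A = k" using that by (simp_all add: kneser_vertices_def)
    have "card {p. p < ?N \<and> B p = A} = expected_slots n k n A" using counts A(1) by blast
    also have "\<dots> = 1" using A(2) by (simp add: expected_slots_def)
    finally obtain p where p: "{p. p < ?N \<and> B p = A} = {p}" by (rule card_1_singletonE)
    have "q < ?N \<and> B q = A \<longleftrightarrow> q = p" for q
    proof -
      have "q \<in> {p. p < ?N \<and> B p = A} \<longleftrightarrow> q \<in> {p}" by (simp only: p)
      then show ?thesis by (simp only: mem_Collect_eq singleton_iff)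
    qed
    then show ?thesis by simp
  qed
  define slot where "slot A = (THE p. p < ?N \<and> B p = A)" for A
  have slot: "slot A < ?N" "B (slot A) = A" if "A \<in> kneser_vertices n k" for A
    using theI'[OF unique_slot[OF that]] unfolding slot_def by simp_all
  have "proper_colouring n k c (\<lambda>A. slot A div s)"
    unfolding proper_colouring_def
  proof (intro conjI ballI impI)
    fix A assume "A \<in> kneser_vertices n k"
    then have "slot A < s * c" using slot(1) assms(3) by (meson less_le_trans)
    then show "slot A div s < c" by (simp add: div_less_iff_less_mult mult.commute assms(1))
  next
    fix A A' assume A: "A \<in> kneser_vertices n k" and A': "A' \<in> kneser_vertices n k"
      and adj: "compl_kneser_adj A A'"
    then have "A \<noteq> A'" "A \<inter> A' \<noteq> {}" by (simp_all add: compl_kneser_adj_def)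
    then have "slot A \<noteq> slot A'" using slot[OF A] slot[OF A'] by metis
    then show "slot A div s \<noteq> slot A' div s"
      using disjoint slot[OF A] slot[OF A'] \<open>A \<inter> A' \<noteq> {}\<close> by metis
  qed
  then show ?thesis unfolding chi_compl_kneser_def by (intro Least_le) blast
qed

section \<open>Lower bounds for \<open>t2\<close>\<close>

lemma nat_ceiling_divide:
  assumes "0 < d"
  shows "nat \<lceil>real m / real d\<rceil> = (m + d - 1) div d"
proof -
  define q where "q = (m + d - 1) div d"
  have "q * d \<le> m + d - 1" "m + d - 1 < q * d + d"
    unfolding q_def using assms div_times_less_eq_dividend[of "m + d - 1" d]
      mod_less_divisor[of d "m + d - 1"] div_mult_mod_eq[of "m + d - 1" d] by linarith+
  then have "q * d < m + d" "m \<le> q * d" using assms by linarith+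
  then have "real q - 1 < real m / real d" "real m / real d \<le> real q"
    using assms by (simp_all add: field_simps flip: of_nat_mult of_nat_add)
  then have "\<lceil>real m / real d\<rceil> = int q" by (simp add: ceiling_eq_iff)
  then show ?thesis by (simp add: q_def)
qed

lemma t2_eq:
  assumes "1 \<le> n" "2 \<le> k"
  shows "t2 n k = (\<Sum>i=1..(n + 1) div 2. ((n - i) choose (k - 1)) div ((n + 2 * k - 4) div (2 * k - 2) + 1))"
proof -
  have "(real n - 1) / (2 * (real k - 1)) = real (n - 1) / real (2 * k - 2)"
    using assms by simp
  moreover have "n - 1 + (2 * k - 2) - 1 = n + 2 * k - 4" using assms by simp
  ultimately have "nat \<lceil>(real n - 1) / (2 * (real k - 1))\<rceil> = (n + 2 * k - 4) div (2 * k - 2)"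
    using nat_ceiling_divide[of "2 * k - 2" "n - 1"] assms by simp
  moreover have "nat \<lceil>real n / 2\<rceil> = (n + 1) div 2"
    using nat_ceiling_divide[of 2 n] by simp
  ultimately show ?thesis by (simp add: t2_def Let_def)
qed

lemma sum_binomial_hockey_stick:
  assumes "1 \<le> k" "M \<le> n"
  shows "(\<Sum>i=1..M. (n - i) choose (k - 1)) + ((n - M) choose k) = n choose k"
  using assms(2)
proof (induction M)
  case (Suc M)
  have "n - M = Suc (n - Suc M)" "k = Suc (k - 1)" using Suc.prems assms(1) by simp_all
  then have "((n - Suc M) choose (k - 1)) + ((n - Suc M) choose k) = (n - M) choose k"
    by (metis binomial_Suc_Suc)
  then show ?case using Suc by simp
qed simp

lemma power_two_mult_binomial_le: "2 ^ k * (a choose k) \<le> (2 * a) choose k"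
proof (induction k)
  case (Suc k)
  have absorb: "Suc k * (m choose Suc k) = (m - k) * (m choose k)" for m
    using binomial_absorption[of k m] binomial_absorb_comp[of m k] by simp
  have "Suc k * (2 ^ Suc k * (a choose Suc k)) = 2 ^ Suc k * ((a - k) * (a choose k))"
    by (simp only: mult.left_commute[of "Suc k"] absorb)
  also have "\<dots> = 2 * (a - k) * (2 ^ k * (a choose k))" by (simp only: power_Suc mult_ac)
  also have "\<dots> \<le> (2 * a - k) * ((2 * a) choose k)"
    using Suc.IH by (intro mult_mono) auto
  also have "\<dots> = Suc k * ((2 * a) choose Suc k)" by (simp only: absorb)
  finally show ?case by (simp only: mult_le_cancel1)
qed simp

lemma sum_le_mult_sum_div:
  fixes f :: "'a \<Rightarrow> nat"
  assumes "finite I"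
  shows "sum f I \<le> (l + 1) * (\<Sum>i\<in>I. f i div (l + 1)) + card I * l"
proof -
  have "f i \<le> (l + 1) * (f i div (l + 1)) + l" for i
  proof -
    have "f i = (l + 1) * (f i div (l + 1)) + f i mod (l + 1)" by (rule mult_div_mod_eq[symmetric])
    moreover have "f i mod (l + 1) \<le> l" using mod_less_divisor[of "l + 1" "f i"] by linarith
    ultimately show ?thesis by linarith
  qed
  then have "sum f I \<le> (\<Sum>i\<in>I. (l + 1) * (f i div (l + 1)) + l)" by (rule sum_mono)
  then show ?thesis by (simp add: sum.distrib sum_distrib_left)
qed

lemma t2_lower_bound:
  assumes "1 \<le> n" "2 \<le> k"
  defines "l \<equiv> (n + 2 * k - 4) div (2 * k - 2)" and "M \<equiv> (n + 1) div 2"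
  shows "n choose k \<le> (l + 1) * t2 n k + M * l + ((n - M) choose k)"
proof -
  have "M \<le> n" using assms(1) by (simp add: M_def)
  then have "n choose k = (\<Sum>i=1..M. (n - i) choose (k - 1)) + ((n - M) choose k)"
    using sum_binomial_hockey_stick[of k M n] assms(2) by simp
  also have "(\<Sum>i=1..M. (n - i) choose (k - 1)) \<le> (l + 1) * t2 n k + M * l"
    using sum_le_mult_sum_div[of "{1..M}" "\<lambda>i. (n - i) choose (k - 1)" l] t2_eq[OF assms(1,2)]
    by (simp add: l_def M_def)
  finally show ?thesis by simp
qed

lemma binomial_le_mult_t2:
  fixes X L :: real
  assumes n: "1 \<le> n" and k: "2 \<le> k" and X: "1 \<le> X" "X \<le> 2 ^ k"
    and L: "real ((n + 2 * k - 4) div (2 * k - 2)) \<le> L"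
    and ineq: "real s * X * ((real n + 1) / 2) * L \<le> (real s * (X - 1) - X * (L + 1)) * real (n choose k)"
  shows "n choose k \<le> s * t2 n k"
proof -
  define l where "l = (n + 2 * k - 4) div (2 * k - 2)"
  define M where "M = (n + 1) div 2"
  define N T H where "N = real (n choose k)" and "T = real (t2 n k)" and "H = real ((n - M) choose k)"
  have "real (n choose k) \<le> real ((l + 1) * t2 n k + M * l + ((n - M) choose k))"
    using t2_lower_bound[OF n k] unfolding l_def M_def by (simp only: of_nat_le_iff)
  then have base: "N \<le> (real l + 1) * T + real M * real l + H"
    unfolding N_def T_def H_def by (simp add: algebra_simps)
  have "2 ^ k * ((n - M) choose k) \<le> n choose k"
  proof -
    have "2 ^ k * ((n - M) choose k) \<le> (2 * (n - M)) choose k" by (rule power_two_mult_binomial_le)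
    also have "\<dots> \<le> n choose k" by (rule binomial_right_mono) (simp add: M_def)
    finally show ?thesis .
  qed
  then have "2 ^ k * H \<le> N" unfolding H_def N_def by (metis of_nat_le_iff of_nat_mult of_nat_numeral of_nat_power)
  moreover have "X * H \<le> 2 ^ k * H" using X(2) by (intro mult_right_mono) (simp_all add: H_def)
  ultimately have XH: "X * H \<le> N" by linarith
  have "real M * real l \<le> ((real n + 1) / 2) * L"
    using L by (intro mult_mono) (auto simp: M_def l_def)
  then have Ml: "real s * X * (real M * real l) \<le> real s * X * ((real n + 1) / 2 * L)"
    using X by (intro mult_left_mono) auto
  have "X * (real l + 1) * N \<le> X * (L + 1) * N"
    using L X by (intro mult_right_mono) (auto simp: l_def N_def)
  also have "\<dots> \<le> real s * (X - 1) * N - real s * X * ((real n + 1) / 2 * L)"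
    using ineq unfolding N_def[symmetric] by (simp add: algebra_simps)
  also have "\<dots> \<le> real s * X * N - real s * N - real s * X * (real M * real l)"
    using Ml by (simp add: algebra_simps)
  also have "\<dots> \<le> real s * X * N - real s * (X * H) - real s * X * (real M * real l)"
    using XH by (simp add: mult_left_mono)
  also have "\<dots> = real s * X * (N - real M * real l - H)" by (simp add: algebra_simps)
  also have "\<dots> \<le> real s * X * ((real l + 1) * T)"
    using base X by (intro mult_left_mono) auto
  also have "\<dots> = X * (real l + 1) * (real s * T)" by (simp add: algebra_simps)
  finally have "X * (real l + 1) * N \<le> X * (real l + 1) * (real s * T)" .
  moreover have "0 < X * (real l + 1)" using X by simp
  ultimately have "N \<le> real s * T" by (rule mult_left_le_imp_le)
  then show ?thesis unfolding N_def T_def by (simp only: of_nat_mult [symmetric] of_nat_le_iff)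
qed

lemma binomial_le_mult_t2_polynomial:
  fixes X :: real
  assumes n: "1 \<le> n" and k: "2 \<le> k" and X: "1 \<le> X" "X \<le> 2 ^ k"
    and ineq: "real s * X * (real n + 1) * (real n + 2 * real k - 4)
      \<le> 2 * (real s * (X - 1) * (2 * real k - 2) - X * (real n + 4 * real k - 6)) * real (n choose k)"
  shows "n choose k \<le> s * t2 n k"
proof (rule binomial_le_mult_t2[OF n k X])
  define L where "L = (real n + 2 * real k - 4) / (2 * real k - 2)"
  have d: "0 < 2 * real k - 2" using k by simp
  have "(n + 2 * k - 4) div (2 * k - 2) * (2 * k - 2) \<le> n + 2 * k - 4"
    by (rule div_times_less_eq_dividend)
  then have "real ((n + 2 * k - 4) div (2 * k - 2) * (2 * k - 2)) \<le> real (n + 2 * k - 4)"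
    by (simp only: of_nat_le_iff)
  then have "real ((n + 2 * k - 4) div (2 * k - 2)) * (2 * real k - 2) \<le> real n + 2 * real k - 4"
    using n k by simp
  then show "real ((n + 2 * k - 4) div (2 * k - 2)) \<le> L"
    unfolding L_def using d by (simp add: pos_le_divide_eq)
  have "real s * X * ((real n + 1) / 2) * L
      = real s * X * (real n + 1) * (real n + 2 * real k - 4) / (2 * (2 * real k - 2))"
    unfolding L_def using d by (simp add: field_simps)
  also have "\<dots> \<le> 2 * (real s * (X - 1) * (2 * real k - 2) - X * (real n + 4 * real k - 6))
      * real (n choose k) / (2 * (2 * real k - 2))"
    using ineq d by (intro divide_right_mono) auto
  also have "\<dots> = (real s * (X - 1) - X * (L + 1)) * real (n choose k)"
    unfolding L_def using d by (simp add: field_simps)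
  finally show "real s * X * ((real n + 1) / 2) * L \<le> (real s * (X - 1) - X * (L + 1)) * real (n choose k)" .
qed

lemma binomial_le_mult_t2_numeric:
  assumes "1 \<le> n" "2 \<le> k"
    and "real s * 2 ^ k * ((real n + 1) / 2) * real ((n + 2 * k - 4) div (2 * k - 2))
      \<le> (real s * (2 ^ k - 1) - 2 ^ k * (real ((n + 2 * k - 4) div (2 * k - 2)) + 1)) * real (n choose k)"
  shows "n choose k \<le> s * t2 n k"
  using assms by (intro binomial_le_mult_t2[where X = "2 ^ k"]) auto

lemma binomial_3_mult: "6 * (m choose 3) = m * (m - 1) * (m - 2)"
proof -
  have "3 * (m choose 3) = m * ((m - 1) choose 2)"
    using binomial_absorption[of 2 m] by (simp add: numeral_3_eq_3)
  moreover have "2 * ((m - 1) choose 2) = (m - 1) * (m - 2)"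
    using binomial_absorption[of 1 "m - 1"] by (simp add: numeral_2_eq_2)
  ultimately show ?thesis by (metis mult.assoc mult.left_commute num_double numeral_times_numeral)
qed

lemma binomial_4_mult: "24 * (m choose 4) = m * (m - 1) * (m - 2) * (m - 3)"
proof -
  have "4 * (m choose 4) = m * ((m - 1) choose 3)"
    using binomial_absorption[of 3 m] by (simp add: numeral_3_eq_3 numeral_Bit0)
  then have "24 * (m choose 4) = m * (6 * ((m - 1) choose 3))" by simp
  also have "\<dots> = m * ((m - 1) * (m - 1 - 1) * (m - 1 - 2))" by (simp only: binomial_3_mult)
  also have "\<dots> = m * (m - 1) * (m - 2) * (m - 3)"
    by (simp add: mult.assoc numeral_2_eq_2 numeral_3_eq_3)
  finally show ?thesis .
qed

lemma power_le_binomial: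
  assumes "1 \<le> k" "s * k \<le> n"
  shows "real s ^ k \<le> real (n choose k)"
proof (cases "s = 0")
  case False
  then have "k \<le> n" using assms(2) by (metis le_trans mult_le_mono1 mult_1 less_one not_less)
  have "real s * real k \<le> real n" using assms(2) by (metis of_nat_le_iff of_nat_mult)
  then have "real s \<le> real n / real k" using assms(1) by (simp add: pos_le_divide_eq)
  then have "real s ^ k \<le> (real n / real k) ^ k" by (intro power_mono) auto
  also have "\<dots> \<le> real (n choose k)" using \<open>k \<le> n\<close> by (rule binomial_ge_n_over_k_pow_k)
  finally show ?thesis .
qed (use assms(1) in \<open>simp add: power_0_left\<close>)

lemma binomial_le_mult_t2_k3_large:
  assumes s: "19 \<le> s" and r: "1 \<le> r" "r \<le> 2"
  shows "(3 * s + r) choose 3 \<le> s * t2 (3 * s + r) 3"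
proof -
  define S Nn C where "S = real s" and "Nn = real (3 * s + r)" and "C = real ((3 * s + r) choose 3)"
  define P where "P = (3 * S + 1) * (3 * S) * (3 * S - 1)"
  have S19: "19 \<le> S" using s by (simp add: S_def)
  have Nn: "3 * S + 1 \<le> Nn" "Nn \<le> 3 * S + 2" using r by (auto simp: S_def Nn_def)
  have "real (6 * ((3 * s + 1) choose 3)) = real ((3 * s + 1) * (3 * s + 1 - 1) * (3 * s + 1 - 2))"
    by (simp only: binomial_3_mult)
  also have "\<dots> = P" using s by (simp add: P_def S_def algebra_simps)
  finally have "P \<le> 6 * C"
    using binomial_right_mono[of "3 * s + 1" "3 * s + r" 3] r by (simp add: C_def)
  have poly: "24 * S * (3 * S + 3) * (3 * S + 4) \<le> (4 * S - 64) * P"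
  proof -
    define u where "u = S - 19"
    have S: "S = u + 19" by (simp add: u_def)
    have "(4 * S - 64) * P - 24 * S * (3 * S + 3) * (3 * S + 4)
        = 108 * u ^ 4 + 6264 * u ^ 3 + 122604 * u ^ 2 + 838032 * u + 552672"
      unfolding P_def S by (simp add: algebra_simps eval_nat_numeral)
    moreover have "0 \<le> u" using S19 by (simp add: u_def)
    ultimately show ?thesis by (smt (verit) zero_le_power)
  qed
  have "(Nn + 1) * (Nn + 2) \<le> (3 * S + 3) * (3 * S + 4)"
    using Nn S19 by (intro mult_mono) auto
  then have "24 * S * ((Nn + 1) * (Nn + 2)) \<le> 24 * S * ((3 * S + 3) * (3 * S + 4))"
    using S19 by (intro mult_left_mono) auto
  then have "3 * (S * 8 * (Nn + 1) * (Nn + 2)) \<le> 24 * S * (3 * S + 3) * (3 * S + 4)"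
    by (simp add: algebra_simps)
  also have "\<dots> \<le> (4 * S - 64) * P" by (rule poly)
  also have "\<dots> \<le> (4 * S - 64) * (6 * C)"
    using \<open>P \<le> 6 * C\<close> S19 by (intro mult_left_mono) auto
  also have "\<dots> \<le> (S * 7 * 4 - 8 * (Nn + 6)) * (6 * C)"
    using Nn by (intro mult_right_mono) (auto simp: C_def)
  finally have "S * 8 * (Nn + 1) * (Nn + 2) \<le> 2 * (S * 7 * 4 - 8 * (Nn + 6)) * C"
    by (simp add: algebra_simps)
  then show ?thesis
    using r by (intro binomial_le_mult_t2_polynomial[where X = 8]) (simp_all add: S_def Nn_def C_def algebra_simps)
qed

lemma binomial_le_mult_t2_k4_large:
  assumes s: "9 \<le> s" and r: "r \<le> 3"
  shows "(4 * s + r) choose 4 \<le> s * t2 (4 * s + r) 4"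
proof -
  define S Nn C where "S = real s" and "Nn = real (4 * s + r)" and "C = real ((4 * s + r) choose 4)"
  have S9: "9 \<le> S" using s by (simp add: S_def)
  have Nn: "4 * S \<le> Nn" "Nn \<le> 4 * S + 3" using r by (auto simp: S_def Nn_def)
  have "S ^ 4 \<le> C" unfolding S_def C_def by (rule power_le_binomial) simp_all
  have poly: "16 * S * (4 * S + 4) * (4 * S + 7) \<le> 2 * (26 * S - 208) * S ^ 4"
  proof -
    define u where "u = S - 9"
    have S: "S = u + 9" by (simp add: u_def)
    have "2 * (26 * S - 208) * S ^ 4 - 16 * S * (4 * S + 4) * (4 * S + 7)
        = 52 * u ^ 5 + 1924 * u ^ 4 + 26888 * u ^ 3 + 169288 * u ^ 2 + 417476 * u + 93492"
      unfolding S by (simp add: algebra_simps eval_nat_numeral)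
    moreover have "0 \<le> u" using S9 by (simp add: u_def)
    ultimately show ?thesis by (smt (verit) zero_le_power)
  qed
  have "(Nn + 1) * (Nn + 4) \<le> (4 * S + 4) * (4 * S + 7)"
    using Nn S9 by (intro mult_mono) auto
  then have "16 * S * ((Nn + 1) * (Nn + 4)) \<le> 16 * S * ((4 * S + 4) * (4 * S + 7))"
    using S9 by (intro mult_left_mono) auto
  then have "S * 16 * (Nn + 1) * (Nn + 4) \<le> 16 * S * (4 * S + 4) * (4 * S + 7)"
    by (simp add: algebra_simps)
  also have "\<dots> \<le> 2 * (26 * S - 208) * S ^ 4" by (rule poly)
  also have "\<dots> \<le> 2 * (26 * S - 208) * C" using \<open>S ^ 4 \<le> C\<close> S9 by (intro mult_left_mono) auto
  also have "\<dots> \<le> 2 * (S * 15 * 6 - 16 * (Nn + 10)) * C"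
    using Nn by (intro mult_right_mono) (auto simp: C_def)
  finally show ?thesis
    using s by (intro binomial_le_mult_t2_polynomial[where X = 16]) (simp_all add: S_def Nn_def C_def algebra_simps)
qed

lemma k_mult_quadratic_le_power:
  fixes k s :: nat
  assumes k: "5 \<le> k" and s: "7 \<le> s"
  shows "2 * k * (s + 1) * (s + 3) \<le> s ^ (k - 1)"
proof -
  obtain j where j: "k = j + 5" using k by (metis add.commute le_Suc_ex)
  have "k \<le> 5 * 2 ^ j" using j less_exp[of j] by linarith
  also have "\<dots> \<le> 5 * s ^ j" using s by (simp add: power_mono)
  finally have k_le: "k \<le> 5 * s ^ j" .
  have "7 * s \<le> s * s" using s by (rule mult_le_mono1)
  moreover have "10 * (s + 1) * (s + 3) = 10 * (s * s) + 40 * s + 30" by (simp add: algebra_simps)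
  ultimately have "10 * (s + 1) * (s + 3) \<le> 49 * (s * s)" using s by linarith
  also have "\<dots> \<le> (s * s) * (s * s)" using \<open>7 * s \<le> s * s\<close> s by (intro mult_le_mono1) linarith
  finally have quadratic: "10 * (s + 1) * (s + 3) \<le> s ^ 4" by (simp add: power4_eq_xxxx mult.assoc)
  have "2 * k * (s + 1) * (s + 3) \<le> 2 * (5 * s ^ j) * (s + 1) * (s + 3)"
    using k_le by (intro mult_le_mono1) simp
  also have "\<dots> = (10 * (s + 1) * (s + 3)) * s ^ j" by (simp add: algebra_simps)
  also have "\<dots> \<le> s ^ 4 * s ^ j" using quadratic by simp
  also have "\<dots> = s ^ (k - 1)" using j by (simp add: power_add)
  finally show ?thesis .
qed

lemma binomial_le_mult_t2_k5:
  assumes k: "5 \<le> k" and s: "7 \<le> s" and r: "r \<le> k - 1"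
  shows "(s * k + r) choose k \<le> s * t2 (s * k + r) k"
proof -
  define S K Nn C where "S = real s" and "K = real k" and "Nn = real (s * k + r)"
    and "C = real ((s * k + r) choose k)"
  have S7: "7 \<le> S" and K5: "5 \<le> K" using s k by (simp_all add: S_def K_def)
  have Nn: "S * K \<le> Nn" "Nn \<le> S * K + K - 1" using r k by (auto simp: S_def K_def Nn_def)
  have Nn0: "0 \<le> Nn" by (simp add: Nn_def)
  have X: "(32::real) \<le> 2 ^ k" using power_increasing[of 5 k "2::real"] k by simp
  have n: "1 \<le> s * k + r" using k s by (simp add: Suc_le_eq)
  have "S ^ k \<le> C" unfolding S_def C_def using k by (intro power_le_binomial) simp_all
  have "2 * k * (s + 1) * (s + 3) \<le> s ^ (k - 1)" using k s by (rule k_mult_quadratic_le_power)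
  then have pw: "2 * K * (S + 1) * (S + 3) \<le> S ^ (k - 1)"
    unfolding S_def K_def by (metis (mono_tags) of_nat_le_iff of_nat_mult of_nat_power of_nat_add of_nat_1 of_nat_numeral)
  have "(Nn + 1) * (Nn + 2 * K - 4) \<le> (K * (S + 1)) * (K * (S + 3))"
    using Nn K5 S7 Nn0 by (intro mult_mono) (auto simp: algebra_simps)
  then have "S * 32 * ((Nn + 1) * (Nn + 2 * K - 4)) \<le> S * 32 * ((K * (S + 1)) * (K * (S + 3)))"
    using S7 by (intro mult_left_mono) auto
  also have "\<dots> = 16 * K * S * (2 * K * (S + 1) * (S + 3))" by (simp add: algebra_simps)
  also have "\<dots> \<le> 16 * K * S * S ^ (k - 1)" using pw K5 S7 by (intro mult_left_mono) auto
  also have "\<dots> = 16 * K * S ^ k" using k by (simp add: power_eq_if algebra_simps)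
  also have "\<dots> \<le> 16 * K * C" using \<open>S ^ k \<le> C\<close> K5 by (intro mult_left_mono) auto
  also have "\<dots> \<le> 2 * (S * 31 * (2 * K - 2) - 32 * (Nn + 4 * K - 6)) * C"
  proof -
    have "S * (30 * K - 62) \<ge> 7 * (30 * K - 62)" using S7 K5 by (intro mult_right_mono) auto
    then have "8 * K \<le> S * 31 * (2 * K - 2) - 32 * (Nn + 4 * K - 6)"
      using Nn K5 by (simp add: algebra_simps)
    then show ?thesis by (intro mult_right_mono) (auto simp: C_def)
  qed
  finally show ?thesis
    using k n X by (intro binomial_le_mult_t2_polynomial[where X = 32])
      (simp_all add: S_def K_def Nn_def C_def algebra_simps)
qed

lemma binomial_le_mult_t2_s6:
  assumes k: "7 \<le> k" and r: "r \<le> k - 1"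
  shows "(6 * k + r) choose k \<le> 6 * t2 (6 * k + r) k"
proof -
  define K Nn C where "K = real k" and "Nn = real (6 * k + r)" and "C = real ((6 * k + r) choose k)"
  have K7: "7 \<le> K" using k by (simp add: K_def)
  have X: "(128::real) \<le> 2 ^ k" using power_increasing[of 7 k "2::real"] k by simp
  have Nn: "6 * K \<le> Nn" "Nn \<le> 7 * K - 1" using r k by (auto simp: K_def Nn_def)
  have "6 ^ k \<le> C" unfolding C_def using k power_le_binomial[of k 6 "6 * k + r"] by simp
  have "931 * k \<le> 6 ^ k"
  proof -
    obtain j where j: "k = j + 7" using k by (metis add.commute le_Suc_ex)
    have "931 * k \<le> 931 * (7 * 2 ^ j)" using j less_exp[of j] by linarith
    also have "\<dots> \<le> 6 ^ 7 * 6 ^ j" using power_mono[of "2::nat" 6 j] by simp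
    also have "\<dots> = 6 ^ k" using j by (simp add: power_add)
    finally show ?thesis .
  qed
  then have pw: "931 * K \<le> 6 ^ k" unfolding K_def by (metis of_nat_le_iff of_nat_mult of_nat_numeral of_nat_power)
  have "(Nn + 1) * (Nn + 2 * K - 4) \<le> (7 * K) * (9 * K)" using Nn K7 by (intro mult_mono) auto
  then have "6 * 128 * (Nn + 1) * (Nn + 2 * K - 4) \<le> 48384 * (K * K)" by (simp add: algebra_simps)
  also have "\<dots> \<le> 52 * K * (931 * K)" using K7 by simp
  also have "\<dots> \<le> 52 * K * 6 ^ k" using pw K7 by (intro mult_left_mono) auto
  also have "\<dots> \<le> 52 * K * C" using \<open>6 ^ k \<le> C\<close> K7 by (intro mult_left_mono) auto
  also have "\<dots> \<le> 2 * (6 * 127 * (2 * K - 2) - 128 * (Nn + 4 * K - 6)) * C"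
    using Nn K7 by (intro mult_right_mono) (auto simp: C_def)
  finally show ?thesis
    using k X by (intro binomial_le_mult_t2_polynomial[where X = 128])
      (simp_all add: K_def Nn_def C_def algebra_simps)
qed

lemma binomial_le_mult_t2_k3:
  assumes s: "17 \<le> s" and r: "1 \<le> r" "r \<le> 2"
  shows "(3 * s + r) choose 3 \<le> s * t2 (3 * s + r) 3"
proof (cases "19 \<le> s")
  case True
  then show ?thesis using binomial_le_mult_t2_k3_large r by blast
next
  case False
  have binomial_eq: "m choose 3 = m * (m - 1) * (m - 2) div 6" for m
    unfolding binomial_3_mult[symmetric] by simp
  from False s r consider "s = 17" "r = 1" | "s = 17" "r = 2" | "s = 18" "r = 1" | "s = 18" "r = 2"
    by linarith
  then show ?thesis by cases (rule binomial_le_mult_t2_numeric; simp add: binomial_eq)+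
qed

lemma binomial_le_mult_t2_k4:
  assumes s: "7 \<le> s" and r: "1 \<le> r" "r \<le> 3"
  shows "(4 * s + r) choose 4 \<le> s * t2 (4 * s + r) 4"
proof (cases "9 \<le> s")
  case True
  then show ?thesis using binomial_le_mult_t2_k4_large r by blast
next
  case False
  have binomial_eq: "m choose 4 = m * (m - 1) * (m - 2) * (m - 3) div 24" for m
    unfolding binomial_4_mult[symmetric] by simp
  from False s r consider "s = 7" "r = 1" | "s = 7" "r = 2" | "s = 7" "r = 3"
    | "s = 8" "r = 1" | "s = 8" "r = 2" | "s = 8" "r = 3"
    by linarith
  then show ?thesis by cases (rule binomial_le_mult_t2_numeric; simp add: binomial_eq)+
qed

theorem lemma4p2:
  fixes n s k r :: nat
  assumes "n = s * k + r" and "s \<ge> 2" and "k \<ge> 3" and "1 \<le> r" and "r \<le> k - 1"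
    and "(k \<ge> 4 \<and> s \<ge> 7) \<or> (k = 3 \<and> s \<ge> 17) \<or> (k \<ge> 7 \<and> s = 6)"
  shows "t2 n k \<ge> chi_compl_kneser n k"
proof -
  have "n choose k \<le> s * t2 n k"
    using assms(6)
  proof (elim disjE conjE)
    assume k: "4 \<le> k" and s: "7 \<le> s"
    show ?thesis
    proof (cases "k = 4")
      case True
      then show ?thesis using binomial_le_mult_t2_k4[OF s] assms(1,4,5) by (simp add: mult.commute)
    next
      case False
      then show ?thesis using binomial_le_mult_t2_k5[OF _ s] k assms(1,5) by simp
    qed
  next
    assume "k = 3" "17 \<le> s"
    then show ?thesis using binomial_le_mult_t2_k3 assms(1,4,5) by (simp add: mult.commute)
  next
    assume "7 \<le> k" "s = 6"
    then show ?thesis using binomial_le_mult_t2_s6 assms(1,5) by (simp add: mult.commute)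
  qed
  moreover have "s * k \<le> n" "0 < s" using assms(1,2) by simp_all
  ultimately show ?thesis using chi_compl_kneser_le by blast
qed

end
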